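(* Let $a<b$ and let $f:[a,b]\rightarrow\mathbb{R}$ be a differentiable mapping in $(a,b)$ such that $f'\in L^1[a,b]$ and $\gamma\le f'(x)\le \Gamma$ for all $x\in [a,b]$, where $\gamma,\Gamma$ are real constants. Put $S=\frac{f(b)-f(a)}{b-a}$. Then \[ \left|f\left(\frac{a+b}{2}\right)-\frac{1}{b-a}\int_{a}^{b}f(t)\,dt\right|\leq \frac{b-a}{2}(S-\gamma) \] and \[ \left|f\left(\frac{a+b}{2}\right)-\frac{1}{b-a}\int_{a}^{b}f(t)\,dt\right|\leq \frac{b-a}{2}(\Gamma-S). \] *)

theory Defs
  imports "HOL-Analysis.Analysis"
begin

end

theory Submission
  imports Defs
begin

text \<open>Adding a linear function to \<open>f\<close> does not change the difference between the midpoint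
  value and the mean. Since \<open>f x - \<gamma> x\<close> and \<open>\<Gamma> x - f x\<close> are nondecreasing, it suffices to
  show \<open>|g((a+b)/2) - mean g| \<le> (g b - g a)/2\<close> for nondecreasing \<open>g\<close>; this follows by
  bounding \<open>g\<close> on each half of \<open>[a,b]\<close> by its values at the endpoints of that half.\<close>

definition midpoint_deviation :: "(real \<Rightarrow> real) \<Rightarrow> real \<Rightarrow> real \<Rightarrow> real" where
  "midpoint_deviation f a b = f ((a + b) / 2) - (1 / (b - a)) * integral {a..b} f"

lemma midpoint_deviation_add_linear:
  assumes "a < b" and "f integrable_on {a..b}"
  shows "midpoint_deviation (\<lambda>x. f x + c * x) a b = midpoint_deviation f a b"
proof -
  define k where "k = c * ((a + b) / 2)"
  have "integral {a..b} (\<lambda>x. c * x) = c * ((b\<^sup>2 - a\<^sup>2) / 2)"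
    using integral_ident[of a b] assms(1) by simp
  also have "\<dots> = (b - a) * k"
    by (simp add: k_def power2_eq_square field_simps)
  finally have shift: "integral {a..b} (\<lambda>x. f x + c * x) = integral {a..b} f + (b - a) * k"
    using integral_add[OF assms(2), of "\<lambda>x. c * x"]
    by (simp add: integrable_continuous_real continuous_intros)
  show ?thesis
    unfolding midpoint_deviation_def shift using assms(1) by (simp add: k_def field_simps)
qed

lemma midpoint_deviation_uminus:
  "midpoint_deviation (\<lambda>x. - f x) a b = - midpoint_deviation f a b"
  by (simp add: midpoint_deviation_def integral_neg)

lemma mono_on_if_deriv_nonneg:
  fixes g g' :: "real \<Rightarrow> real"
  assumes "continuous_on {a..b} g"
    and "\<And>x. x \<in> {a<..<b} \<Longrightarrow> (g has_real_derivative g' x) (at x)"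
    and "\<And>x. x \<in> {a<..<b} \<Longrightarrow> 0 \<le> g' x"
  shows "mono_on {a..b} g"
proof (rule mono_onI)
  fix x y assume "x \<in> {a..b}" "y \<in> {a..b}" "x \<le> y"
  then show "g x \<le> g y"
    by (intro DERIV_nonneg_imp_increasing_open[of x y g]
        continuous_on_subset[OF assms(1)]) (use assms(2,3) in force)+
qed

lemma integral_bounds_mono_on:
  fixes g :: "real \<Rightarrow> real"
  assumes "c \<le> d" and "mono_on {c..d} g" and "g integrable_on {c..d}"
  shows "(d - c) * g c \<le> integral {c..d} g" and "integral {c..d} g \<le> (d - c) * g d"
proof -
  have "integral {c..d} (\<lambda>_. g c) \<le> integral {c..d} g"
    by (rule integral_le) (use assms in \<open>auto intro: mono_onD\<close>)
  then show "(d - c) * g c \<le> integral {c..d} g"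
    using assms(1) by simp
  have "integral {c..d} g \<le> integral {c..d} (\<lambda>_. g d)"
    by (rule integral_le) (use assms in \<open>auto intro: mono_onD\<close>)
  then show "integral {c..d} g \<le> (d - c) * g d"
    using assms(1) by simp
qed

lemma abs_midpoint_deviation_le_mono_on:
  fixes g :: "real \<Rightarrow> real"
  assumes "a < b" and "continuous_on {a..b} g" and "mono_on {a..b} g"
  shows "\<bar>midpoint_deviation g a b\<bar> \<le> (g b - g a) / 2"
proof -
  define m where "m = (a + b) / 2"
  define mean where "mean = (1 / (b - a)) * integral {a..b} g"
  have m: "a \<le> m" "m \<le> b" "m - a = (b - a) / 2" "b - m = (b - a) / 2"
    using assms(1) by (simp_all add: m_def field_simps)
  have int: "g integrable_on {a..b}"
    using assms(2) integrable_continuous_real by blast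
  have halves: "g integrable_on {a..m}" "g integrable_on {m..b}"
    using integrable_subinterval_real[OF int] m by auto
  have mono_halves: "mono_on {a..m} g" "mono_on {m..b} g"
    using mono_on_subset[OF assms(3)] m by auto
  note left = integral_bounds_mono_on[OF m(1) mono_halves(1) halves(1)]
  note right = integral_bounds_mono_on[OF m(2) mono_halves(2) halves(2)]
  have "integral {a..m} g + integral {m..b} g = integral {a..b} g"
    using Henstock_Kurzweil_Integration.integral_combine[OF m(1,2) int] .
  then have "(b - a) / 2 * (g a + g m) \<le> integral {a..b} g"
    and "integral {a..b} g \<le> (b - a) / 2 * (g m + g b)"
    using left right m by (simp_all add: algebra_simps)
  then have "(g a + g m) / 2 \<le> mean" and "mean \<le> (g m + g b) / 2"
    using assms(1) by (simp_all add: mean_def field_simps)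
  moreover have "g a \<le> g m" "g m \<le> g b"
    using mono_onD[OF assms(3)] m by auto
  ultimately have "\<bar>g m - mean\<bar> \<le> (g b - g a) / 2"
    unfolding abs_le_iff by auto
  then show ?thesis
    by (simp add: midpoint_deviation_def m_def mean_def)
qed

theorem corollary2p3:
  fixes f f' :: "real \<Rightarrow> real" and a b \<gamma> \<Gamma> S :: real
  assumes "a < b"
    and "continuous_on {a..b} f"
    and "\<And>x. x \<in> {a<..<b} \<Longrightarrow> (f has_real_derivative f' x) (at x)"
    and "f' absolutely_integrable_on {a..b}"
    and "\<And>x. x \<in> {a..b} \<Longrightarrow> \<gamma> \<le> f' x \<and> f' x \<le> \<Gamma>"
    and "S = (f b - f a) / (b - a)"
  shows "\<bar>f ((a + b) / 2) - (1 / (b - a)) * integral {a..b} f\<bar> \<le> (b - a) / 2 * (S - \<gamma>) \<and>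
         \<bar>f ((a + b) / 2) - (1 / (b - a)) * integral {a..b} f\<bar> \<le> (b - a) / 2 * (\<Gamma> - S)"
proof -
  define g1 where "g1 x = f x + (- \<gamma>) * x" for x
  define g2 where "g2 x = - f x + \<Gamma> * x" for x
  have int: "f integrable_on {a..b}" "(\<lambda>x. - f x) integrable_on {a..b}"
    using assms(2) by (auto intro: integrable_continuous_real continuous_intros)
  have cont: "continuous_on {a..b} g1" "continuous_on {a..b} g2"
    unfolding g1_def g2_def by (intro continuous_intros assms(2))+
  have "mono_on {a..b} g1"
    using assms(3,5) unfolding g1_def
    by (intro mono_on_if_deriv_nonneg[where g' = "\<lambda>x. f' x - \<gamma>"] continuous_intros assms(2))
      (auto intro!: derivative_eq_intros)
  moreover have "midpoint_deviation g1 a b = midpoint_deviation f a b"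
    unfolding g1_def by (rule midpoint_deviation_add_linear[OF assms(1) int(1)])
  ultimately have bound1: "\<bar>midpoint_deviation f a b\<bar> \<le> (g1 b - g1 a) / 2"
    using abs_midpoint_deviation_le_mono_on[OF assms(1) cont(1)] by simp
  have "mono_on {a..b} g2"
    using assms(3,5) unfolding g2_def
    by (intro mono_on_if_deriv_nonneg[where g' = "\<lambda>x. \<Gamma> - f' x"] continuous_intros assms(2))
      (auto intro!: derivative_eq_intros)
  moreover have "midpoint_deviation g2 a b = - midpoint_deviation f a b"
    unfolding g2_def midpoint_deviation_add_linear[OF assms(1) int(2)]
    by (rule midpoint_deviation_uminus)
  ultimately have bound2: "\<bar>midpoint_deviation f a b\<bar> \<le> (g2 b - g2 a) / 2"
    using abs_midpoint_deviation_le_mono_on[OF assms(1) cont(2)] by simp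
  moreover have "(g1 b - g1 a) / 2 = (b - a) / 2 * (S - \<gamma>)"
    "(g2 b - g2 a) / 2 = (b - a) / 2 * (\<Gamma> - S)"
    using assms(1,6) by (simp_all add: g1_def g2_def field_simps)
  ultimately show ?thesis
    using bound1 unfolding midpoint_deviation_def by simp
qed

end
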